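(* Let $\{\mu_t\}_{t\in[0,T]}$ and $A_E$ be as in the definition of approximative solutions below. Then for all $t_1\le t_2$ in $A_E$, $$\int_{t_1}^{t_2}D[\mu_t]\,dt\le E[\mu_{t_1}]-E[\mu_{t_2}];$$ in particular $t\mapsto E[\mu_t]$ is non-increasing on $A_E$ (hence for a.a. $t$).
   Context: Setting: $T>0$, $\alpha\in[1,2]$, $d\ge1$, $\psi(s)=s^{-\alpha}$. $\Delta=\{(x,v,x',v'):x=x'\}$; $E[\mu_t]=\int|v|^2d\mu_t$; $D[\mu_t]=\int_{\mathbb{R}^{4d}\setminus\Delta}\frac{|v-v'|^2}{|x-x'|^\alpha}d[\mu_t\otimes\mu_t]$. Particle system: $\dot x_i=v_i$, $\dot v_i=\frac1N\sum_{j\ne i}\psi(|x_i-x_j|)(v_j-v_i)$ (unique smooth non-collisional global solutions for distinct initial positions). Atomic solution: $\mu^N_t=\frac1N\sum_i\delta_{x_i^N(t)}\otimes\delta_{v_i^N(t)}$, $\mu^N=\mu^N_t\otimes\lambda^1(t)$, where $\mu=\mu_t\otimes\lambda^1(t)$ means $\int g\,d\mu=\int_0^T\int g(t,\cdot)d\mu_t\,dt$. Approximative solutions: given compactly supported $\rho_0\in\mathcal{P}(\mathbb{R}^d)$ and $u_0\in L^\infty(\rho_0;\mathbb{R}^d)$, for each $N$ take initial data $(x_{i0}^N,v_{i0}^N)_{i=1}^N$ with pairwise distinct $x_{i0}^N$ such that $\frac1N\sum_i\delta_{x_{i0}^N}\rightharpoonup\rho_0$ and $\frac1N\sum_iv_{i0}^N\delta_{x_{i0}^N}\rightharpoonup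 u_0\rho_0$ narrowly, with all $\mu^N_t$ supported in $(T+1)B(M)\times B(M)$ for a fixed $M$; let $\mu^N$ be the associated atomic solutions, and pass to a subsequence (not relabeled) such that: $\mu^N\rightharpoonup\mu=\mu_t\otimes\lambda^1(t)$ narrowly; $[\mu^N_t\otimes\mu^N_t]\otimes\lambda^1(t)\rightharpoonup[\mu_t\otimes\mu_t]\otimes\lambda^1(t)$ narrowly; $\rho^N_t:=\int_{\mathbb{R}^d_v}d\mu^N_t\to\rho_t$ in $C([0,T];(\mathcal{M}_+(\mathbb{R}^d),d_{BL}))$; and $E[\mu^N_t]\to E[\mu_t]$ for all $t$ in a full-measure set $A_E\subset[0,T]$. The measures $\mu_t$ are supported in the closure of $(T+1)B(M)\times B(M)$. Here $B(r)$ is the open ball of radius $r$ at $0$ and $d_{BL}$ the bounded-Lipschitz distance. *)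

theory Defs
  imports "HOL-Probability.Probability"
begin

definition psi :: "real \<Rightarrow> real \<Rightarrow> real" where
  "psi \<alpha> s = s powr (- \<alpha>)"

definition empirical :: "nat \<Rightarrow> (nat \<Rightarrow> 'b::topological_space) \<Rightarrow> 'b measure" where
  "empirical N p = measure_of UNIV (sets borel)
      (\<lambda>A. (\<Sum>i<N. ennreal (indicator A (p i))) / of_nat N)"

definition energy :: "('a::real_normed_vector \<times> 'a) measure \<Rightarrow> real" where
  "energy \<mu> = (\<integral>z. (norm (snd z))\<^sup>2 \<partial>\<mu>)"

definition dissipation :: "real \<Rightarrow> ('a::real_normed_vector \<times> 'a) measure \<Rightarrow> ennreal" where
  "dissipation \<alpha> \<mu> = (\<integral>\<^sup>+ p. indicator {p. fst (fst p) \<noteq> fst (snd p)} p *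
      ennreal ((norm (snd (fst p) - snd (snd p)))\<^sup>2 / (dist (fst (fst p)) (fst (snd p))) powr \<alpha>)
      \<partial>(\<mu> \<Otimes>\<^sub>M \<mu>))"

definition BL1 :: "('a::metric_space \<Rightarrow> real) \<Rightarrow> bool" where
  "BL1 f \<longleftrightarrow> (\<forall>x. \<bar>f x\<bar> \<le> 1) \<and> (\<forall>x y. \<bar>f x - f y\<bar> \<le> dist x y)"

definition dBL :: "'a::metric_space measure \<Rightarrow> 'a measure \<Rightarrow> real" where
  "dBL \<mu> \<nu> = (SUP f \<in> Collect BL1. \<bar>(\<integral>x. f x \<partial>\<mu>) - (\<integral>x. f x \<partial>\<nu>)\<bar>)"

definition narrow_conv :: "(nat \<Rightarrow> 'b::topological_space measure) \<Rightarrow> 'b measure \<Rightarrow> bool" where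
  "narrow_conv M L \<longleftrightarrow> (\<forall>g::'b \<Rightarrow> real. continuous_on UNIV g \<and> bounded (range g) \<longrightarrow>
      (\<lambda>n. \<integral>z. g z \<partial>M n) \<longlonglongrightarrow> (\<integral>z. g z \<partial>L))"

text \<open>Narrow convergence on [0,T] x X of measures of the form mu_t (x) lambda^1(t), i.e.
  of the measures g |-> int_0^T int g(t,.) d mu_t dt.\<close>
definition narrow_conv_time ::
  "real \<Rightarrow> (nat \<Rightarrow> real \<Rightarrow> 'b::topological_space measure) \<Rightarrow> (real \<Rightarrow> 'b measure) \<Rightarrow> bool" where
  "narrow_conv_time T M L \<longleftrightarrow> (\<forall>g::real \<times> 'b \<Rightarrow> real.
      continuous_on ({0..T} \<times> UNIV) g \<and> bounded (g ` ({0..T} \<times> UNIV)) \<longrightarrow>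
      (\<lambda>n. LINT t:{0..T}|lborel. (\<integral>z. g (t, z) \<partial>M n t))
        \<longlonglongrightarrow> (LINT t:{0..T}|lborel. (\<integral>z. g (t, z) \<partial>L t)))"

end

theory Submission
  imports Defs
begin

text \<open>For the particle system, differentiating the kinetic energy and symmetrising the double sum
  gives the exact identity E(a) - E(b) = int_a^b D dt. The singular integrand
  1_(t1,t2)(t) |v - v'|^2 / |x - x'|^alpha is approximated from below by an increasing sequence of
  bounded continuous test functions. For each of them the time-integrated pair integral passes to
  the limit under the narrow convergence of mu^N_t (x) mu^N_t (x) dt, and it is bounded by
  E_N(t1) - E_N(t2), which converges to E(t1) - E(t2) for t1, t2 in A_E. Monotone convergence in the
  approximation parameter yields the inequality; monotonicity of the energy is the limit of the
  discrete monotonicity, which holds because D >= 0.\<close>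

section \<open>Empirical measures\<close>

lemma empirical_eq_distr_pmf_of_set:
  fixes p :: "nat \<Rightarrow> 'b::topological_space"
  assumes N: "N > 0"
  shows "empirical N p = distr (measure_pmf (pmf_of_set {..<N})) borel p"
proof -
  have ne: "{..<N} \<noteq> {}" using N by auto
  have "empirical N p = measure_of UNIV (sets borel) (emeasure (distr (measure_pmf (pmf_of_set {..<N})) borel p))"
    unfolding empirical_def
  proof (rule measure_of_eq)
    show "sets borel \<subseteq> Pow UNIV" by auto
    fix A :: "'b set" assume "A \<in> sigma_sets UNIV (sets borel)"
    then have A: "A \<in> sets borel" by (metis sets.sigma_sets_eq sets_borel space_borel)
    have "emeasure (distr (measure_pmf (pmf_of_set {..<N})) borel p) A
        = emeasure (measure_pmf (pmf_of_set {..<N})) (p -` A)"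
      using A by (subst emeasure_distr) auto
    also have "\<dots> = of_nat (card ({..<N} \<inter> p -` A)) / of_nat N"
      using ne N by (subst emeasure_pmf_of_set)
        (auto simp: divide_ennreal[symmetric] ennreal_of_nat_eq_real_of_nat)
    also have "of_nat (card ({..<N} \<inter> p -` A)) = (\<Sum>i<N. ennreal (indicator A (p i)))"
      by (simp add: indicator_def sum.If_cases Int_def ennreal_of_nat_eq_real_of_nat)
    finally show "(\<Sum>i<N. ennreal (indicator A (p i))) / of_nat N =
        emeasure (distr (measure_pmf (pmf_of_set {..<N})) borel p) A" by simp
  qed
  also have "\<dots> = distr (measure_pmf (pmf_of_set {..<N})) borel p"
    using measure_of_of_measure[of "distr (measure_pmf (pmf_of_set {..<N})) borel p"] by simp
  finally show ?thesis .
qed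

lemma prob_space_empirical: "N > 0 \<Longrightarrow> prob_space (empirical N p)"
  by (simp add: empirical_eq_distr_pmf_of_set measure_pmf.prob_space_distr)

lemma sets_empirical: "N > 0 \<Longrightarrow> sets (empirical N p) = sets borel"
  by (simp add: empirical_eq_distr_pmf_of_set)

lemma integral_empirical:
  fixes f :: "'b::topological_space \<Rightarrow> real"
  assumes "N > 0" "f \<in> borel_measurable borel"
  shows "(\<integral>z. f z \<partial>empirical N p) = (\<Sum>i<N. f (p i)) / real N"
  using assms lessThan_empty_iff[of N]
  by (simp add: empirical_eq_distr_pmf_of_set integral_distr integral_pmf_of_set)

lemma nn_integral_empirical:
  fixes f :: "'b::topological_space \<Rightarrow> ennreal"
  assumes "N > 0" "f \<in> borel_measurable borel"
  shows "(\<integral>\<^sup>+z. f z \<partial>empirical N p) = (\<Sum>i<N. f (p i)) / of_nat N"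
  using assms lessThan_empty_iff[of N]
  by (simp add: empirical_eq_distr_pmf_of_set nn_integral_distr nn_integral_pmf_of_set)

lemma sets_pair_measure_eq_borel:
  fixes M :: "'b::second_countable_topology measure"
  assumes "sets M = sets borel"
  shows "sets (M \<Otimes>\<^sub>M M) = sets (borel :: ('b \<times> 'b) measure)"
  using assms by (simp add: sets_pair_measure_cong[OF assms assms]) (metis borel_prod)

lemma nn_integral_empirical_pair:
  fixes p :: "nat \<Rightarrow> 'b::second_countable_topology" and f :: "'b \<times> 'b \<Rightarrow> ennreal"
  assumes N: "N > 0" and f: "f \<in> borel_measurable borel"
  shows "(\<integral>\<^sup>+z. f z \<partial>(empirical N p \<Otimes>\<^sub>M empirical N p))
     = (\<Sum>i<N. \<Sum>j<N. f (p i, p j)) / (of_nat N * of_nat N)"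
proof -
  interpret prob_space "empirical N p" by (rule prob_space_empirical[OF N])
  have "f \<in> borel_measurable (empirical N p \<Otimes>\<^sub>M empirical N p)"
    using f measurable_cong_sets[OF sets_pair_measure_eq_borel[OF sets_empirical[OF N]] refl] by blast
  then have "(\<integral>\<^sup>+z. f z \<partial>(empirical N p \<Otimes>\<^sub>M empirical N p))
     = (\<integral>\<^sup>+ x. \<integral>\<^sup>+ y. f (x, y) \<partial>empirical N p \<partial>empirical N p)"
    by (simp add: nn_integral_fst)
  also have "\<dots> = (\<integral>\<^sup>+ x. (\<Sum>j<N. f (x, p j)) / of_nat N \<partial>empirical N p)"
    by (rule nn_integral_cong, rule nn_integral_empirical[OF N]) (use f in measurable)
  also have "\<dots> = (\<Sum>i<N. (\<Sum>j<N. f (p i, p j)) / of_nat N) / of_nat N"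
    by (rule nn_integral_empirical[OF N]) (use f in measurable)
  also have "\<dots> = (\<Sum>i<N. \<Sum>j<N. f (p i, p j)) / (of_nat N * of_nat N)"
    by (simp add: divide_ennreal_def sum_distrib_right mult.assoc ennreal_inverse_mult of_nat_less_top)
  finally show ?thesis .
qed

lemma energy_empirical:
  fixes p :: "nat \<Rightarrow> 'a::real_normed_vector \<times> 'a"
  assumes "N > 0"
  shows "energy (empirical N p) = (\<Sum>i<N. (norm (snd (p i)))\<^sup>2) / real N"
  unfolding energy_def
  by (rule integral_empirical[OF assms], intro borel_measurable_continuous_onI continuous_intros)

text \<open>Since \<open>0 powr \<alpha> = 0\<close> and division by zero yields zero, the density vanishes on the
  diagonal \<open>x = x'\<close>; the indicator in \<open>dissipation\<close> is therefore redundant.\<close>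
definition dissipation_density :: "real \<Rightarrow> ('a::real_normed_vector \<times> 'a) \<times> ('a \<times> 'a) \<Rightarrow> real" where
  "dissipation_density \<alpha> = (\<lambda>((x, v), (x', v')). (norm (v - v'))\<^sup>2 / dist x x' powr \<alpha>)"

lemma dissipation_density_nonneg: "0 \<le> dissipation_density \<alpha> z"
  by (simp add: dissipation_density_def case_prod_beta)

lemma borel_measurable_dissipation_density:
  "(dissipation_density \<alpha> :: ('a::{real_normed_vector, second_countable_topology} \<times> 'a) \<times> ('a \<times> 'a) \<Rightarrow> real)
     \<in> borel_measurable borel"
  unfolding dissipation_density_def case_prod_beta
  by (intro borel_measurable_divide powr_real_measurable borel_measurable_continuous_onI continuous_intros)

lemma dissipation_eq_nn_integral_density:
  "dissipation \<alpha> \<mu> = (\<integral>\<^sup>+ z. ennreal (dissipation_density \<alpha> z) \<partial>(\<mu> \<Otimes>\<^sub>M \<mu>))"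
  unfolding dissipation_def
  by (rule nn_integral_cong) (auto simp: dissipation_density_def case_prod_beta indicator_def)

lemma psi_mul_eq_dissipation_density:
  "psi \<alpha> (norm (x - x')) * (norm (v - v'))\<^sup>2 = dissipation_density \<alpha> ((x, v), (x', v'))"
  by (simp add: psi_def dissipation_density_def powr_minus divide_inverse dist_norm)

lemma dissipation_empirical:
  fixes p :: "nat \<Rightarrow> 'a::{real_normed_vector, second_countable_topology} \<times> 'a"
  assumes N: "N > 0"
  shows "dissipation \<alpha> (empirical N p)
    = ennreal ((\<Sum>i<N. \<Sum>j<N. dissipation_density \<alpha> (p i, p j)) / (real N * real N))"
proof -
  have "dissipation \<alpha> (empirical N p)
      = (\<Sum>i<N. \<Sum>j<N. ennreal (dissipation_density \<alpha> (p i, p j))) / (of_nat N * of_nat N)"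
    unfolding dissipation_eq_nn_integral_density
    by (rule nn_integral_empirical_pair[OF N]) (use borel_measurable_dissipation_density in measurable)
  also have "\<dots> = ennreal ((\<Sum>i<N. \<Sum>j<N. dissipation_density \<alpha> (p i, p j)) / (real N * real N))"
    using N by (simp add: ennreal_of_nat_eq_real_of_nat flip: ennreal_mult)
      (simp add: divide_ennreal dissipation_density_nonneg sum_nonneg)
  finally show ?thesis .
qed

section \<open>Energy identity for the particle system\<close>

lemma sum_weighted_inner_diff_symmetrize:
  fixes V :: "nat \<Rightarrow> 'a::real_inner" and w :: "nat \<Rightarrow> nat \<Rightarrow> real"
  assumes sym: "\<And>i j. w i j = w j i"
  shows "2 * (\<Sum>i<N. \<Sum>j<N. w i j * (V i \<bullet> (V j - V i)))
       = - (\<Sum>i<N. \<Sum>j<N. w i j * (norm (V i - V j))\<^sup>2)"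
proof -
  let ?S = "\<Sum>i<N. \<Sum>j<N. w i j * (V i \<bullet> (V j - V i))"
  have "?S = (\<Sum>i<N. \<Sum>j<N. w i j * (V j \<bullet> (V i - V j)))"
    by (subst sum.swap) (simp add: sym)
  then have "2 * ?S = ?S + (\<Sum>i<N. \<Sum>j<N. w i j * (V j \<bullet> (V i - V j)))"
    by simp
  also have "\<dots> = (\<Sum>i<N. \<Sum>j<N. w i j * (V i \<bullet> (V j - V i) + V j \<bullet> (V i - V j)))"
    by (simp add: sum.distrib distrib_left)
  also have "\<dots> = (\<Sum>i<N. \<Sum>j<N. - (w i j * (norm (V i - V j))\<^sup>2))"
    by (intro sum.cong refl)
      (simp add: power2_norm_eq_inner inner_diff_left inner_diff_right inner_commute algebra_simps)
  finally show ?thesis by (simp add: sum_negf)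
qed

lemma particle_kinetic_energy_derivative:
  fixes X V :: "nat \<Rightarrow> real \<Rightarrow> 'a::real_inner"
  assumes ode_v: "\<And>i. i < N \<Longrightarrow> (V i has_vector_derivative
           (1 / real N) *\<^sub>R (\<Sum>j\<in>{..<N} - {i}. psi \<alpha> (norm (X i t - X j t)) *\<^sub>R (V j t - V i t)))
        (at t within S)"
  shows "((\<lambda>t. (\<Sum>i<N. (norm (V i t))\<^sup>2) / real N) has_vector_derivative
      - ((\<Sum>i<N. \<Sum>j<N. psi \<alpha> (norm (X i t - X j t)) * (norm (V i t - V j t))\<^sup>2) / (real N * real N)))
      (at t within S)"
proof -
  define A where "A i = (1 / real N) *\<^sub>R
      (\<Sum>j\<in>{..<N} - {i}. psi \<alpha> (norm (X i t - X j t)) *\<^sub>R (V j t - V i t))" for i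
  have "((\<lambda>t. (norm (V i t))\<^sup>2) has_vector_derivative (V i t \<bullet> A i + A i \<bullet> V i t)) (at t within S)"
    if "i < N" for i
    unfolding A_def power2_norm_eq_inner using ode_v[OF that] ode_v[OF that]
    by (rule bounded_bilinear.has_vector_derivative[OF bounded_bilinear_inner])
  then have deriv: "((\<lambda>t. (\<Sum>i<N. (norm (V i t))\<^sup>2) / real N) has_vector_derivative
      (\<Sum>i<N. V i t \<bullet> A i + A i \<bullet> V i t) / real N) (at t within S)"
    by (intro has_vector_derivative_divide has_vector_derivative_sum) simp
  have VA: "V i t \<bullet> A i
      = (1 / real N) * (\<Sum>j<N. psi \<alpha> (norm (X i t - X j t)) * (V i t \<bullet> (V j t - V i t)))" if "i < N" for i
    using that sum.remove[of "{..<N}" i "\<lambda>j. psi \<alpha> (norm (X i t - X j t)) * (V i t \<bullet> (V j t - V i t))"]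
    by (simp add: A_def inner_sum_right)
  have "(\<Sum>i<N. V i t \<bullet> A i + A i \<bullet> V i t) = 2 * (\<Sum>i<N. V i t \<bullet> A i)"
    by (simp add: inner_commute[of "A _"] sum_distrib_left)
  also have "\<dots>
      = 2 * ((1 / real N) * (\<Sum>i<N. \<Sum>j<N. psi \<alpha> (norm (X i t - X j t)) * (V i t \<bullet> (V j t - V i t))))"
    by (simp add: VA sum_distrib_left)
  also have "\<dots>
      = - (1 / real N) * (\<Sum>i<N. \<Sum>j<N. psi \<alpha> (norm (X i t - X j t)) * (norm (V i t - V j t))\<^sup>2)"
    using sum_weighted_inner_diff_symmetrize[where w="\<lambda>i j. psi \<alpha> (norm (X i t - X j t))"
        and V="\<lambda>i. V i t" and N=N]
    by (simp add: norm_minus_commute)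
  finally show ?thesis
    by (intro has_vector_derivative_eq_rhs[OF deriv]) simp
qed

lemma particle_energy_identity:
  fixes X V :: "nat \<Rightarrow> real \<Rightarrow> 'a::{real_inner, second_countable_topology}"
  assumes N: "N > 0" and ab: "a \<le> b"
    and ode_v: "\<And>i t. i < N \<Longrightarrow> t \<in> {a..b} \<Longrightarrow> (V i has_vector_derivative
           (1 / real N) *\<^sub>R (\<Sum>j\<in>{..<N} - {i}. psi \<alpha> (norm (X i t - X j t)) *\<^sub>R (V j t - V i t)))
        (at t within {a..b})"
  shows "((\<lambda>t. enn2real (dissipation \<alpha> (empirical N (\<lambda>i. (X i t, V i t))))) has_integral
      energy (empirical N (\<lambda>i. (X i a, V i a))) - energy (empirical N (\<lambda>i. (X i b, V i b)))) {a..b}"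
proof -
  define D where "D t = (\<Sum>i<N. \<Sum>j<N. psi \<alpha> (norm (X i t - X j t)) * (norm (V i t - V j t))\<^sup>2)
      / (real N * real N)" for t
  define E where "E t = (\<Sum>i<N. (norm (V i t))\<^sup>2) / real N" for t
  have "(E has_vector_derivative - D t) (at t within {a..b})" if "t \<in> {a..b}" for t
    unfolding D_def E_def by (rule particle_kinetic_energy_derivative, rule ode_v[OF _ that])
  then have "((\<lambda>t. - D t) has_integral (E b - E a)) {a..b}"
    by (rule fundamental_theorem_of_calculus[OF ab])
  from has_integral_neg[OF this] have "(D has_integral (E a - E b)) {a..b}"
    by simp
  moreover have "dissipation \<alpha> (empirical N (\<lambda>i. (X i t, V i t))) = ennreal (D t)" for t
    unfolding D_def psi_mul_eq_dissipation_density by (rule dissipation_empirical[OF N])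
  moreover have "0 \<le> D t" for t
    unfolding D_def psi_mul_eq_dissipation_density
    by (intro divide_nonneg_nonneg sum_nonneg dissipation_density_nonneg) simp
  moreover have "energy (empirical N (\<lambda>i. (X i t, V i t))) = E t" for t
    using N by (simp add: energy_empirical E_def)
  ultimately show ?thesis by simp
qed

section \<open>Bounded continuous minorants of the dissipation integrand\<close>

text \<open>Truncation at height \<open>n + 1\<close>, regularisation of the singularity below distance \<open>1 / (n + 1)\<close>
  and a continuous cut-off near the diagonal make this a bounded continuous minorant of
  \<open>dissipation_density\<close>, increasing to it as \<open>n \<rightarrow> \<infinity>\<close>.\<close>
definition density_approx :: "real \<Rightarrow> nat \<Rightarrow> ('a::real_normed_vector \<times> 'a) \<times> ('a \<times> 'a) \<Rightarrow> real" where
  "density_approx \<alpha> n = (\<lambda>((x, v), (x', v')).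
      min (real (Suc n)) ((norm (v - v'))\<^sup>2 / max (dist x x') (1 / real (Suc n)) powr \<alpha>)
      * min 1 (real (Suc n) * dist x x'))"

lemma density_approx_nonneg: "0 \<le> density_approx \<alpha> n z"
  unfolding density_approx_def case_prod_beta by (intro mult_nonneg_nonneg) auto

lemma density_approx_le: "density_approx \<alpha> n z \<le> real (Suc n)"
proof -
  have "density_approx \<alpha> n z \<le> real (Suc n) * 1"
    unfolding density_approx_def case_prod_beta by (intro mult_mono) auto
  then show ?thesis by simp
qed

lemma density_approx_mono:
  assumes "0 \<le> \<alpha>" "n \<le> m"
  shows "density_approx \<alpha> n z \<le> density_approx \<alpha> m z"
proof -
  obtain x v x' v' where z: "z = ((x, v), (x', v'))" by (metis prod.collapse)
  define d where "d = dist x x'"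
  define q where "q = (norm (v - v'))\<^sup>2"
  have nm: "real (Suc n) \<le> real (Suc m)" using assms by simp
  have pos: "0 < max d (1 / real (Suc k))" for k by (simp add: less_max_iff_disj)
  have powr_pos: "0 < max d (1 / real (Suc k)) powr \<alpha>" for k
    using pos[of k] by simp
  have "1 / real (Suc m) \<le> 1 / real (Suc n)"
    using nm by (simp add: frac_le)
  then have "max d (1 / real (Suc m)) \<le> max d (1 / real (Suc n))"
    by simp
  then have "max d (1 / real (Suc m)) powr \<alpha> \<le> max d (1 / real (Suc n)) powr \<alpha>"
    by (rule powr_mono2[OF assms(1) less_imp_le[OF pos]])
  then have "q / max d (1 / real (Suc n)) powr \<alpha> \<le> q / max d (1 / real (Suc m)) powr \<alpha>"
    by (intro divide_left_mono mult_pos_pos powr_pos) (simp_all add: q_def)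
  then have "min (real (Suc n)) (q / max d (1 / real (Suc n)) powr \<alpha>) * min 1 (real (Suc n) * d)
      \<le> min (real (Suc m)) (q / max d (1 / real (Suc m)) powr \<alpha>) * min 1 (real (Suc m) * d)"
    using nm by (intro mult_mono min.mono mult_right_mono) (auto simp: d_def q_def)
  then show ?thesis by (simp add: density_approx_def z d_def q_def)
qed

lemma density_approx_le_dissipation_density:
  assumes "0 \<le> \<alpha>"
  shows "density_approx \<alpha> n z \<le> dissipation_density \<alpha> z"
proof -
  obtain x v x' v' where z: "z = ((x, v), (x', v'))" by (metis prod.collapse)
  show ?thesis
  proof (cases "x = x'")
    case True
    then show ?thesis by (simp add: z density_approx_def dissipation_density_nonneg)
  next
    case False
    then have d: "0 < dist x x'" by simp
    have "density_approx \<alpha> n z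
        = min (real (Suc n)) ((norm (v - v'))\<^sup>2 / max (dist x x') (1 / real (Suc n)) powr \<alpha>)
          * min 1 (real (Suc n) * dist x x')"
      by (simp add: z density_approx_def)
    also have "\<dots> \<le> (norm (v - v'))\<^sup>2 / max (dist x x') (1 / real (Suc n)) powr \<alpha> * 1"
      by (intro mult_mono) auto
    also have "\<dots> \<le> (norm (v - v'))\<^sup>2 / dist x x' powr \<alpha>"
    proof -
      have "dist x x' powr \<alpha> \<le> max (dist x x') (1 / real (Suc n)) powr \<alpha>"
        using d assms by (intro powr_mono2) auto
      then show ?thesis
        using d by (subst mult_1_right, intro divide_left_mono mult_pos_pos) auto
    qed
    finally show ?thesis by (simp add: z dissipation_density_def)
  qed
qed

lemma density_approx_tendsto: "(\<lambda>n. density_approx \<alpha> n z) \<longlonglongrightarrow> dissipation_density \<alpha> z"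
proof -
  obtain x v x' v' where z: "z = ((x, v), (x', v'))" by (metis prod.collapse)
  show ?thesis
  proof (cases "x = x'")
    case True
    then show ?thesis by (simp add: z density_approx_def dissipation_density_def)
  next
    case False
    then have d: "0 < dist x x'" by simp
    define r where "r = (norm (v - v'))\<^sup>2 / dist x x' powr \<alpha>"
    obtain N :: nat where N: "1 / dist x x' + r < real N" using reals_Archimedean2 by blast
    have "density_approx \<alpha> n z = r" if "N \<le> n" for n
    proof -
      have "0 \<le> r" "0 < 1 / dist x x'" "real N \<le> real (Suc n)"
        using d that by (simp_all add: r_def)
      then have "r \<le> real (Suc n)" and "1 / dist x x' < real (Suc n)"
        using N by linarith+
      then have "1 / real (Suc n) \<le> dist x x'" and "1 \<le> real (Suc n) * dist x x'"
        using d by (simp_all add: field_simps)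
      with \<open>r \<le> real (Suc n)\<close> show ?thesis
        by (simp add: z density_approx_def r_def max_absorb1 min_absorb1 min_absorb2)
    qed
    then have "(\<lambda>n. density_approx \<alpha> n z) \<longlonglongrightarrow> r"
      by (intro tendsto_eventually eventually_sequentiallyI)
    then show ?thesis by (simp add: z dissipation_density_def r_def)
  qed
qed

lemma continuous_density_approx: "continuous_on UNIV (density_approx \<alpha> n)"
proof -
  have "max d (1 / (1 + real n)) \<noteq> 0" for d :: real
    using less_max_iff_disj[of 0 d "1 / (1 + real n)"] by auto
  then show ?thesis
    unfolding density_approx_def case_prod_beta by (intro continuous_intros) auto
qed

definition time_cutoff :: "real \<Rightarrow> real \<Rightarrow> nat \<Rightarrow> real \<Rightarrow> real" where
  "time_cutoff a b n t = min 1 (real (Suc n) * max 0 (min (t - a) (b - t)))"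

lemma time_cutoff_nonneg: "0 \<le> time_cutoff a b n t"
  by (simp add: time_cutoff_def)

lemma time_cutoff_le_indicator: "time_cutoff a b n t \<le> indicator {a..b} t"
  by (auto simp: time_cutoff_def indicator_def)

lemma time_cutoff_mono: "n \<le> m \<Longrightarrow> time_cutoff a b n t \<le> time_cutoff a b m t"
  unfolding time_cutoff_def by (intro min.mono mult_right_mono) auto

lemma time_cutoff_tendsto: "(\<lambda>n. time_cutoff a b n t) \<longlonglongrightarrow> indicator {a<..<b} t"
proof (cases "t \<in> {a<..<b}")
  case True
  define s where "s = min (t - a) (b - t)"
  have s: "0 < s" using True by (simp add: s_def)
  obtain N :: nat where N: "1 / s < real N" using reals_Archimedean2 by blast
  have "time_cutoff a b n t = 1" if "N \<le> n" for n
  proof -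
    have "1 / s < real (Suc n)" using N that by simp
    then have "1 \<le> real (Suc n) * s" using s by (simp add: field_simps)
    then show ?thesis using s by (simp add: time_cutoff_def s_def[symmetric])
  qed
  then have "(\<lambda>n. time_cutoff a b n t) \<longlonglongrightarrow> 1"
    by (intro tendsto_eventually eventually_sequentiallyI)
  then show ?thesis using True by simp
next
  case False
  then have "max 0 (min (t - a) (b - t)) = 0" by auto
  then show ?thesis using False by (simp add: time_cutoff_def)
qed

lemma continuous_time_cutoff: "continuous_on UNIV (time_cutoff a b n)"
  unfolding time_cutoff_def by (intro continuous_intros)

definition cutoff_density_approx ::
  "real \<Rightarrow> real \<Rightarrow> real \<Rightarrow> nat \<Rightarrow> real \<times> ('a::real_normed_vector \<times> 'a) \<times> ('a \<times> 'a) \<Rightarrow> real" where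
  "cutoff_density_approx \<alpha> a b n p = time_cutoff a b n (fst p) * density_approx \<alpha> n (snd p)"

lemma cutoff_density_approx_nonneg: "0 \<le> cutoff_density_approx \<alpha> a b n p"
  unfolding cutoff_density_approx_def
  by (intro mult_nonneg_nonneg time_cutoff_nonneg density_approx_nonneg)

lemma cutoff_density_approx_le: "cutoff_density_approx \<alpha> a b n p \<le> real (Suc n)"
proof -
  have "cutoff_density_approx \<alpha> a b n p \<le> 1 * real (Suc n)"
    unfolding cutoff_density_approx_def
    by (intro mult_mono density_approx_le density_approx_nonneg) (simp_all add: time_cutoff_def)
  then show ?thesis by simp
qed

lemma cutoff_density_approx_le_dissipation_density:
  "0 \<le> \<alpha> \<Longrightarrow> cutoff_density_approx \<alpha> a b n (t, z) \<le> indicator {a..b} t * dissipation_density \<alpha> z"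
  unfolding cutoff_density_approx_def fst_conv snd_conv
  by (intro mult_mono time_cutoff_le_indicator density_approx_le_dissipation_density density_approx_nonneg)
    (auto simp: indicator_def)

lemma cutoff_density_approx_mono:
  "0 \<le> \<alpha> \<Longrightarrow> n \<le> m \<Longrightarrow> cutoff_density_approx \<alpha> a b n p \<le> cutoff_density_approx \<alpha> a b m p"
  unfolding cutoff_density_approx_def
  by (intro mult_mono time_cutoff_mono density_approx_mono time_cutoff_nonneg density_approx_nonneg)

lemma cutoff_density_approx_tendsto:
  "(\<lambda>n. cutoff_density_approx \<alpha> a b n (t, z)) \<longlonglongrightarrow> indicator {a<..<b} t * dissipation_density \<alpha> z"
  unfolding cutoff_density_approx_def fst_conv snd_conv
  by (intro tendsto_mult time_cutoff_tendsto density_approx_tendsto)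

lemma continuous_cutoff_density_approx: "continuous_on UNIV (cutoff_density_approx \<alpha> a b n)"
  unfolding cutoff_density_approx_def
  by (intro continuous_intros continuous_on_compose2[OF continuous_time_cutoff]
      continuous_on_compose2[OF continuous_density_approx]) auto

section \<open>Measurability of product integrals along a kernel\<close>

lemma nn_integral_pair_scale_measure:
  assumes "finite_measure M" and f: "f \<in> borel_measurable (M \<Otimes>\<^sub>M M)"
  shows "(\<integral>\<^sup>+ z. f z \<partial>(scale_measure (ennreal r) M \<Otimes>\<^sub>M scale_measure (ennreal r) M))
    = ennreal r * ennreal r * (\<integral>\<^sup>+ z. f z \<partial>(M \<Otimes>\<^sub>M M))"
proof -
  interpret M: finite_measure M by fact
  interpret S: finite_measure "scale_measure (ennreal r) M"
    by (rule finite_measureI) (simp add: space_scale_measure ennreal_mult_eq_top_iff)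
  have f': "f \<in> borel_measurable (scale_measure (ennreal r) M \<Otimes>\<^sub>M scale_measure (ennreal r) M)"
    using f measurable_cong_sets[OF sets_pair_measure_cong[OF sets_scale_measure sets_scale_measure] refl]
    by blast
  have inner: "(\<lambda>x. \<integral>\<^sup>+ y. f (x, y) \<partial>M) \<in> borel_measurable M"
    using f by (rule M.borel_measurable_nn_integral_fst)
  have "(\<integral>\<^sup>+ z. f z \<partial>(scale_measure (ennreal r) M \<Otimes>\<^sub>M scale_measure (ennreal r) M))
      = (\<integral>\<^sup>+ x. \<integral>\<^sup>+ y. f (x, y) \<partial>scale_measure (ennreal r) M \<partial>scale_measure (ennreal r) M)"
    by (rule S.nn_integral_fst[OF f', symmetric])
  also have "\<dots> = (\<integral>\<^sup>+ x. ennreal r * \<integral>\<^sup>+ y. f (x, y) \<partial>M \<partial>scale_measure (ennreal r) M)"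
    by (intro nn_integral_cong nn_integral_scale_measure measurable_Pair2[OF f])
      (simp add: space_scale_measure)
  also have "\<dots> = ennreal r * (\<integral>\<^sup>+ x. ennreal r * \<integral>\<^sup>+ y. f (x, y) \<partial>M \<partial>M)"
    by (rule nn_integral_scale_measure) (use inner in measurable)
  also have "(\<integral>\<^sup>+ x. ennreal r * \<integral>\<^sup>+ y. f (x, y) \<partial>M \<partial>M) = ennreal r * (\<integral>\<^sup>+ z. f z \<partial>(M \<Otimes>\<^sub>M M))"
    using inner by (simp add: nn_integral_cmult M.nn_integral_fst[OF f])
  finally show ?thesis by (simp only: mult.assoc)
qed

lemma borel_measurable_pair_slice:
  fixes g :: "'c::second_countable_topology \<times> 'b::second_countable_topology \<times> 'b \<Rightarrow> 'd::topological_space"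
  assumes "g \<in> borel_measurable borel" "sets M = sets borel"
  shows "(\<lambda>z. g (t, z)) \<in> borel_measurable (M \<Otimes>\<^sub>M M)"
proof -
  have "(\<lambda>z. g (t, z)) \<in> borel_measurable borel"
    using measurable_Pair2[OF assms(1)[unfolded borel_prod[symmetric]], of t] by (simp add: borel_prod)
  then show ?thesis
    using measurable_cong_sets[OF sets_pair_measure_eq_borel[OF assms(2)] refl] by blast
qed

lemma measurable_normalized_kernel:
  fixes \<mu> :: "'c \<Rightarrow> 'b::topological_space measure"
  assumes fin: "\<And>t. t \<in> space M \<Longrightarrow> finite_measure (\<mu> t)"
    and sets: "\<And>t. t \<in> space M \<Longrightarrow> sets (\<mu> t) = sets borel"
    and kernel: "\<And>B. B \<in> sets borel \<Longrightarrow> (\<lambda>t. emeasure (\<mu> t) B) \<in> borel_measurable M"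
  shows "(\<lambda>t. scale_measure (ennreal (1 / max 1 (measure (\<mu> t) UNIV))) (\<mu> t)) \<in> measurable M (subprob_algebra borel)"
proof (rule measurable_subprob_algebra)
  fix t assume t: "t \<in> space M"
  interpret finite_measure "\<mu> t" using fin[OF t] .
  have space: "space (\<mu> t) = UNIV" using sets_eq_imp_space_eq[OF sets[OF t]] by simp
  show "subprob_space (scale_measure (ennreal (1 / max 1 (measure (\<mu> t) UNIV))) (\<mu> t))"
  proof (rule subprob_spaceI)
    show "emeasure (scale_measure (ennreal (1 / max 1 (measure (\<mu> t) UNIV))) (\<mu> t))
        (space (scale_measure (ennreal (1 / max 1 (measure (\<mu> t) UNIV))) (\<mu> t))) \<le> 1"
      by (simp add: space_scale_measure space emeasure_eq_measure ennreal_mult[symmetric])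
    show "space (scale_measure (ennreal (1 / max 1 (measure (\<mu> t) UNIV))) (\<mu> t)) \<noteq> {}"
      by (simp add: space_scale_measure space)
  qed
  show "sets (scale_measure (ennreal (1 / max 1 (measure (\<mu> t) UNIV))) (\<mu> t)) = sets borel"
    using sets[OF t] by simp
next
  fix A :: "'b set" assume "A \<in> sets borel"
  with kernel[of UNIV] kernel[of A]
  show "(\<lambda>t. emeasure (scale_measure (ennreal (1 / max 1 (measure (\<mu> t) UNIV))) (\<mu> t)) A) \<in> borel_measurable M"
    unfolding emeasure_scale_measure measure_def by measurable
qed

text \<open>Measurability of the time-dependent product integral is reduced to the Giry monad by
  normalising \<open>\<mu> t\<close> to a subprobability measure.\<close>
lemma borel_measurable_nn_integral_pair_kernel:
  fixes \<mu> :: "real \<Rightarrow> 'b::second_countable_topology measure" and h :: "real \<times> 'b \<times> 'b \<Rightarrow> ennreal"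
  assumes fin: "\<And>t. t \<in> S \<Longrightarrow> finite_measure (\<mu> t)"
    and sets: "\<And>t. t \<in> S \<Longrightarrow> sets (\<mu> t) = sets borel"
    and kernel: "\<And>B. B \<in> sets borel \<Longrightarrow> (\<lambda>t. emeasure (\<mu> t) B) \<in> borel_measurable (restrict_space lborel S)"
    and h: "h \<in> borel_measurable borel"
  shows "(\<lambda>t. \<integral>\<^sup>+ z. h (t, z) \<partial>(\<mu> t \<Otimes>\<^sub>M \<mu> t)) \<in> borel_measurable (restrict_space lborel S)"
proof -
  define M where "M = restrict_space lborel S"
  define c where "c t = max 1 (measure (\<mu> t) UNIV)" for t
  define \<nu> where "\<nu> t = scale_measure (ennreal (1 / c t)) (\<mu> t)" for t
  have space_M: "space M = S" by (simp add: M_def space_restrict_space)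
  have \<nu>_meas: "\<nu> \<in> measurable M (subprob_algebra borel)"
    unfolding \<nu>_def c_def using fin sets kernel
    by (intro measurable_normalized_kernel) (simp_all add: M_def space_restrict_space)
  have h_M: "(\<lambda>(t, z). h (t, z)) \<in> borel_measurable (M \<Otimes>\<^sub>M (borel \<Otimes>\<^sub>M borel))"
  proof -
    have "(\<lambda>t. t) \<in> measurable M borel"
      unfolding M_def by (rule measurable_restrict_space1) simp
    then have "(\<lambda>p. (fst p, snd p)) \<in> measurable (M \<Otimes>\<^sub>M (borel \<Otimes>\<^sub>M borel)) (borel \<Otimes>\<^sub>M (borel \<Otimes>\<^sub>M borel))"
      by (intro measurable_Pair measurable_compose[OF measurable_fst] measurable_snd)
    from measurable_compose[OF this h[unfolded borel_prod[symmetric]]] show ?thesis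
      by (simp add: case_prod_beta)
  qed
  have "(\<lambda>t. \<integral>\<^sup>+ z. h (t, z) \<partial>(\<nu> t \<Otimes>\<^sub>M \<nu> t)) \<in> borel_measurable M"
    by (rule nn_integral_measurable_subprob_algebra2[OF h_M measurable_pair_measure[OF \<nu>_meas \<nu>_meas]])
  moreover have "c \<in> borel_measurable M"
    using kernel[of UNIV] unfolding c_def measure_def M_def by measurable
  ultimately have scaled_meas:
    "(\<lambda>t. ennreal (c t) * ennreal (c t) * \<integral>\<^sup>+ z. h (t, z) \<partial>(\<nu> t \<Otimes>\<^sub>M \<nu> t)) \<in> borel_measurable M"
    by measurable
  have "(\<integral>\<^sup>+ z. h (t, z) \<partial>(\<mu> t \<Otimes>\<^sub>M \<mu> t))
      = ennreal (c t) * ennreal (c t) * (\<integral>\<^sup>+ z. h (t, z) \<partial>(\<nu> t \<Otimes>\<^sub>M \<nu> t))" if "t \<in> S" for t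
  proof -
    have "0 < c t" by (simp add: c_def)
    then have "\<mu> t = scale_measure (ennreal (c t)) (\<nu> t)"
      by (simp add: \<nu>_def ennreal_mult[symmetric])
    moreover have "subprob_space (\<nu> t)"
      using measurable_space[OF \<nu>_meas, of t] that by (simp add: space_M space_subprob_algebra)
    then have "finite_measure (\<nu> t)" by (rule subprob_space.axioms(1))
    moreover have "(\<lambda>z. h (t, z)) \<in> borel_measurable (\<nu> t \<Otimes>\<^sub>M \<nu> t)"
      using sets[OF that] by (intro borel_measurable_pair_slice[OF h]) (simp add: \<nu>_def)
    ultimately show ?thesis by (metis nn_integral_pair_scale_measure)
  qed
  then show ?thesis
    using scaled_meas unfolding M_def by (subst measurable_cong) (auto simp: space_restrict_space)
qed

lemma set_borel_measurable_integral_pair_kernel: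
  fixes \<mu> :: "real \<Rightarrow> 'b::second_countable_topology measure" and g :: "real \<times> 'b \<times> 'b \<Rightarrow> real"
  assumes fin: "\<And>t. t \<in> S \<Longrightarrow> finite_measure (\<mu> t)"
    and sets: "\<And>t. t \<in> S \<Longrightarrow> sets (\<mu> t) = sets borel"
    and kernel: "\<And>B. B \<in> sets borel \<Longrightarrow> (\<lambda>t. emeasure (\<mu> t) B) \<in> borel_measurable (restrict_space lborel S)"
    and S: "S \<in> sets borel" and g_meas: "g \<in> borel_measurable borel" and g_nonneg: "\<And>p. 0 \<le> g p"
  shows "set_borel_measurable lborel S (\<lambda>t. \<integral>z. g (t, z) \<partial>(\<mu> t \<Otimes>\<^sub>M \<mu> t))"
proof -
  have "(\<lambda>t. \<integral>\<^sup>+ z. ennreal (g (t, z)) \<partial>(\<mu> t \<Otimes>\<^sub>M \<mu> t)) \<in> borel_measurable (restrict_space lborel S)"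
    using borel_measurable_nn_integral_pair_kernel[where h="\<lambda>p. ennreal (g p)", OF fin sets kernel
        measurable_compose[OF g_meas measurable_ennreal]]
    by simp
  then have "(\<lambda>t. enn2real (\<integral>\<^sup>+ z. ennreal (g (t, z)) \<partial>(\<mu> t \<Otimes>\<^sub>M \<mu> t)))
      \<in> borel_measurable (restrict_space lborel S)"
    by measurable
  moreover have "(\<integral>z. g (t, z) \<partial>(\<mu> t \<Otimes>\<^sub>M \<mu> t)) = enn2real (\<integral>\<^sup>+ z. ennreal (g (t, z)) \<partial>(\<mu> t \<Otimes>\<^sub>M \<mu> t))"
    if "t \<in> S" for t
    by (rule integral_eq_nn_integral[OF borel_measurable_pair_slice[OF g_meas sets[OF that]]])
      (simp add: g_nonneg)
  ultimately have "(\<lambda>t. \<integral>z. g (t, z) \<partial>(\<mu> t \<Otimes>\<^sub>M \<mu> t)) \<in> borel_measurable (restrict_space lborel S)"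
    by (subst measurable_cong) (auto simp: space_restrict_space)
  then show ?thesis
    unfolding set_borel_measurable_def using S by (subst (asm) borel_measurable_restrict_space_iff) auto
qed

section \<open>Passing to the limit under narrow convergence\<close>

text \<open>A non-integrable function has Bochner integral \<open>0\<close>; testing narrow convergence against \<open>1\<close>
  gives the limit \<open>T > 0\<close> instead.\<close>
lemma set_integrable_mass_of_narrow_conv_time:
  fixes M :: "nat \<Rightarrow> real \<Rightarrow> 'b::topological_space measure" and L :: "real \<Rightarrow> 'b measure"
  assumes T: "T > 0" and conv: "narrow_conv_time T M L"
    and prob: "eventually (\<lambda>n. \<forall>t. prob_space (M n t)) sequentially"
  shows "set_integrable lborel {0..T} (\<lambda>t. measure (L t) (space (L t)))"
proof (rule ccontr)
  assume "\<not> ?thesis"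
  then have L0: "(LINT t:{0..T}|lborel. measure (L t) (space (L t))) = 0"
    unfolding set_lebesgue_integral_def set_integrable_def by (rule not_integrable_integral_eq)
  have "continuous_on ({0..T} \<times> UNIV) (\<lambda>_::real \<times> 'b. 1::real)
      \<and> bounded ((\<lambda>_::real \<times> 'b. 1::real) ` ({0..T} \<times> UNIV))"
    by (intro conjI continuous_on_const, rule bounded_subset[of "{1}"]) auto
  from conv[unfolded narrow_conv_time_def, rule_format, OF this]
  have "(\<lambda>n. LINT t:{0..T}|lborel. measure (M n t) (space (M n t))) \<longlonglongrightarrow> 0"
    using L0 by simp
  moreover have "eventually (\<lambda>n. (LINT t:{0..T}|lborel. measure (M n t) (space (M n t))) = T) sequentially"
    using prob by (rule eventually_mono) (use T in \<open>simp add: prob_space.prob_space set_integral_const\<close>)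
  ultimately have "(\<lambda>n. T) \<longlonglongrightarrow> 0"
    by (rule Lim_transform_eventually)
  then show False using T by (simp add: LIMSEQ_const_iff)
qed

lemma set_integrable_pair_integral_of_narrow_conv_time:
  fixes \<mu> :: "real \<Rightarrow> 'b::second_countable_topology measure" and \<nu> :: "nat \<Rightarrow> real \<Rightarrow> 'b measure"
    and g :: "real \<times> 'b \<times> 'b \<Rightarrow> real"
  assumes T: "T > 0"
    and \<mu>_fin: "\<And>t. t \<in> {0..T} \<Longrightarrow> finite_measure (\<mu> t)"
    and \<mu>_sets: "\<And>t. t \<in> {0..T} \<Longrightarrow> sets (\<mu> t) = sets borel"
    and \<mu>_kernel: "\<And>B. B \<in> sets borel \<Longrightarrow>
        (\<lambda>t. emeasure (\<mu> t) B) \<in> borel_measurable (restrict_space lborel {0..T})"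
    and \<nu>_prob: "eventually (\<lambda>k. \<forall>t. prob_space (\<nu> k t)) sequentially"
    and conv: "narrow_conv_time T (\<lambda>k t. \<nu> k t \<Otimes>\<^sub>M \<nu> k t) (\<lambda>t. \<mu> t \<Otimes>\<^sub>M \<mu> t)"
    and g_meas: "g \<in> borel_measurable borel" and g_nonneg: "\<And>p. 0 \<le> g p" and g_le: "\<And>p. g p \<le> C"
  shows "set_integrable lborel {0..T} (\<lambda>t. \<integral>z. g (t, z) \<partial>(\<mu> t \<Otimes>\<^sub>M \<mu> t))"
  unfolding set_integrable_def
proof (rule Bochner_Integration.integrable_bound)
  let ?mass = "\<lambda>t. measure (\<mu> t \<Otimes>\<^sub>M \<mu> t) (space (\<mu> t \<Otimes>\<^sub>M \<mu> t))"
  have "set_integrable lborel {0..T} ?mass"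
    by (intro set_integrable_mass_of_narrow_conv_time[OF T conv] eventually_mono[OF \<nu>_prob])
      (auto intro: prob_space_pair)
  then have "integrable lborel (\<lambda>t. C * (indicator {0..T} t *\<^sub>R ?mass t))"
    unfolding set_integrable_def by (rule integrable_mult_right)
  then show "integrable lborel (\<lambda>t. indicator {0..T} t *\<^sub>R (C * ?mass t))"
    by (simp add: mult.left_commute)
  show "(\<lambda>t. indicator {0..T} t *\<^sub>R (\<integral>z. g (t, z) \<partial>(\<mu> t \<Otimes>\<^sub>M \<mu> t))) \<in> borel_measurable lborel"
    using set_borel_measurable_integral_pair_kernel[OF \<mu>_fin \<mu>_sets \<mu>_kernel _ g_meas g_nonneg]
    unfolding set_borel_measurable_def by simp
  show "AE t in lborel. norm (indicator {0..T} t *\<^sub>R (\<integral>z. g (t, z) \<partial>(\<mu> t \<Otimes>\<^sub>M \<mu> t)))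
      \<le> norm (indicator {0..T} t *\<^sub>R (C * ?mass t))"
  proof (rule AE_I2)
    fix t
    show "norm (indicator {0..T} t *\<^sub>R (\<integral>z. g (t, z) \<partial>(\<mu> t \<Otimes>\<^sub>M \<mu> t)))
      \<le> norm (indicator {0..T} t *\<^sub>R (C * ?mass t))"
    proof (cases "t \<in> {0..T}")
      case True
      interpret finite_measure "\<mu> t \<Otimes>\<^sub>M \<mu> t"
        using \<mu>_fin[OF True] \<mu>_fin[OF True] by (rule finite_measure_pair_measure)
      have "(\<integral>z. g (t, z) \<partial>(\<mu> t \<Otimes>\<^sub>M \<mu> t)) \<le> (\<integral>z. C \<partial>(\<mu> t \<Otimes>\<^sub>M \<mu> t))"
        using g_le g_nonneg borel_measurable_pair_slice[OF g_meas \<mu>_sets[OF True]] order_trans[OF g_nonneg g_le]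
        by (intro integral_mono integrable_const_bound[where B=C]) auto
      moreover have "0 \<le> (\<integral>z. g (t, z) \<partial>(\<mu> t \<Otimes>\<^sub>M \<mu> t))"
        using g_nonneg by (rule Bochner_Integration.integral_nonneg)
      ultimately show ?thesis using True by (simp add: mult.commute)
    qed simp
  qed
qed

lemma nn_integral_test_le_of_narrow_conv_time:
  fixes \<mu> :: "real \<Rightarrow> 'b::second_countable_topology measure" and \<nu> :: "nat \<Rightarrow> real \<Rightarrow> 'b measure"
    and g :: "real \<times> 'b \<times> 'b \<Rightarrow> real"
  assumes T: "T > 0"
    and \<mu>_fin: "\<And>t. t \<in> {0..T} \<Longrightarrow> finite_measure (\<mu> t)"
    and \<mu>_sets: "\<And>t. t \<in> {0..T} \<Longrightarrow> sets (\<mu> t) = sets borel"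
    and \<mu>_kernel: "\<And>B. B \<in> sets borel \<Longrightarrow>
        (\<lambda>t. emeasure (\<mu> t) B) \<in> borel_measurable (restrict_space lborel {0..T})"
    and \<nu>_prob: "eventually (\<lambda>k. \<forall>t. prob_space (\<nu> k t)) sequentially"
    and conv: "narrow_conv_time T (\<lambda>k t. \<nu> k t \<Otimes>\<^sub>M \<nu> k t) (\<lambda>t. \<mu> t \<Otimes>\<^sub>M \<mu> t)"
    and g_cont: "continuous_on UNIV g" and g_nonneg: "\<And>p. 0 \<le> g p" and g_le: "\<And>p. g p \<le> C"
    and bound: "eventually (\<lambda>k. (LINT t:{0..T}|lborel. \<integral>z. g (t, z) \<partial>(\<nu> k t \<Otimes>\<^sub>M \<nu> k t)) \<le> c k) sequentially"
    and c: "c \<longlonglongrightarrow> L"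
  shows "(\<integral>\<^sup>+ t\<in>{0..T}. (\<integral>\<^sup>+ z. ennreal (g (t, z)) \<partial>(\<mu> t \<Otimes>\<^sub>M \<mu> t)) \<partial>lborel) \<le> ennreal L"
proof -
  define G where "G t = (\<integral>z. g (t, z) \<partial>(\<mu> t \<Otimes>\<^sub>M \<mu> t))" for t
  have g_meas: "g \<in> borel_measurable borel"
    using g_cont by (rule borel_measurable_continuous_onI)
  have G_int: "set_integrable lborel {0..T} G"
    unfolding G_def using T \<mu>_fin \<mu>_sets \<mu>_kernel \<nu>_prob conv g_meas g_nonneg g_le
    by (rule set_integrable_pair_integral_of_narrow_conv_time)
  have "continuous_on ({0..T} \<times> UNIV) g \<and> bounded (g ` ({0..T} \<times> UNIV))"
    unfolding bounded_iff
    by (intro conjI continuous_on_subset[OF g_cont] exI[of _ C]) (use g_nonneg g_le in auto)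
  from conv[unfolded narrow_conv_time_def, rule_format, OF this]
  have "(\<lambda>k. LINT t:{0..T}|lborel. \<integral>z. g (t, z) \<partial>(\<nu> k t \<Otimes>\<^sub>M \<nu> k t)) \<longlonglongrightarrow> (LINT t:{0..T}|lborel. G t)"
    unfolding G_def .
  then have G_le: "(LINT t:{0..T}|lborel. G t) \<le> L"
    by (rule tendsto_le[OF trivial_limit_sequentially c _ bound])
  have nn_eq: "(\<integral>\<^sup>+ z. ennreal (g (t, z)) \<partial>(\<mu> t \<Otimes>\<^sub>M \<mu> t)) = ennreal (G t)" if "t \<in> {0..T}" for t
  proof -
    interpret finite_measure "\<mu> t \<Otimes>\<^sub>M \<mu> t"
      using \<mu>_fin[OF that] \<mu>_fin[OF that] by (rule finite_measure_pair_measure)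
    show ?thesis
      unfolding G_def using g_nonneg g_le order_trans[OF g_nonneg g_le]
        borel_measurable_pair_slice[OF g_meas \<mu>_sets[OF that]]
      by (intro nn_integral_eq_integral integrable_const_bound[where B=C]) auto
  qed
  have "(\<integral>\<^sup>+ t\<in>{0..T}. (\<integral>\<^sup>+ z. ennreal (g (t, z)) \<partial>(\<mu> t \<Otimes>\<^sub>M \<mu> t)) \<partial>lborel)
      = (\<integral>\<^sup>+ t. ennreal (indicator {0..T} t *\<^sub>R G t) \<partial>lborel)"
    by (rule nn_integral_cong) (simp add: nn_eq indicator_def)
  also have "\<dots> = ennreal (LINT t:{0..T}|lborel. G t)"
    unfolding set_lebesgue_integral_def using G_int[unfolded set_integrable_def] g_nonneg
    by (intro nn_integral_eq_integral) (auto simp: G_def indicator_def intro!: Bochner_Integration.integral_nonneg)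
  also have "\<dots> \<le> ennreal L"
    using G_le by (rule ennreal_leI)
  finally show ?thesis .
qed

lemma set_integral_test_le_of_dissipation_integral:
  fixes \<nu> :: "real \<Rightarrow> ('a::{real_normed_vector, second_countable_topology} \<times> 'a) measure"
    and g :: "real \<times> ('a \<times> 'a) \<times> ('a \<times> 'a) \<Rightarrow> real"
  assumes sub: "{t1..t2} \<subseteq> {0..T}"
    and \<nu>_sets: "\<And>t. sets (\<nu> t) = sets borel"
    and g_meas: "g \<in> borel_measurable borel" and g_nonneg: "\<And>p. 0 \<le> g p"
    and g_le: "\<And>t z. g (t, z) \<le> indicator {t1..t2} t * dissipation_density \<alpha> z"
    and fin: "\<And>t. t \<in> {t1..t2} \<Longrightarrow> dissipation \<alpha> (\<nu> t) < \<infinity>"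
    and D: "((\<lambda>t. enn2real (dissipation \<alpha> (\<nu> t))) has_integral c) {t1..t2}"
  shows "(LINT t:{0..T}|lborel. \<integral>z. g (t, z) \<partial>(\<nu> t \<Otimes>\<^sub>M \<nu> t)) \<le> c"
proof -
  define D' where "D' t = (if t \<in> {t1..t2} then enn2real (dissipation \<alpha> (\<nu> t)) else 0)" for t
  have D': "(D' has_integral c) {0..T}"
    unfolding D'_def by (rule has_integral_restrict[OF sub, THEN iffD2, OF D])
  have le_D': "(\<integral>z. g (t, z) \<partial>(\<nu> t \<Otimes>\<^sub>M \<nu> t)) \<le> D' t" for t
  proof (cases "t \<in> {t1..t2}")
    case True
    have "(\<integral>z. g (t, z) \<partial>(\<nu> t \<Otimes>\<^sub>M \<nu> t)) = enn2real (\<integral>\<^sup>+ z. ennreal (g (t, z)) \<partial>(\<nu> t \<Otimes>\<^sub>M \<nu> t))"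
      by (rule integral_eq_nn_integral[OF borel_measurable_pair_slice[OF g_meas \<nu>_sets]]) (simp add: g_nonneg)
    also have "\<dots> \<le> enn2real (dissipation \<alpha> (\<nu> t))"
      unfolding dissipation_eq_nn_integral_density using fin[OF True] g_le[of t] True
      by (intro enn2real_mono nn_integral_mono ennreal_leI)
        (auto simp: dissipation_eq_nn_integral_density indicator_def)
    finally show ?thesis using True by (simp add: D'_def)
  next
    case False
    then have "g (t, z) = 0" for z
      using g_le[of t z] g_nonneg[of "(t, z)"] by simp
    then show ?thesis using False by (simp add: D'_def)
  qed
  show ?thesis
  proof (cases "set_integrable lborel {0..T} (\<lambda>t. \<integral>z. g (t, z) \<partial>(\<nu> t \<Otimes>\<^sub>M \<nu> t))")
    case True
    have "(LINT t:{0..T}|lborel. \<integral>z. g (t, z) \<partial>(\<nu> t \<Otimes>\<^sub>M \<nu> t))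
        = integral {0..T} (\<lambda>t. \<integral>z. g (t, z) \<partial>(\<nu> t \<Otimes>\<^sub>M \<nu> t))"
      by (rule set_borel_integral_eq_integral(2)[OF True])
    also have "\<dots> \<le> integral {0..T} D'"
      using set_borel_integral_eq_integral(1)[OF True] has_integral_integrable[OF D'] le_D'
      by (rule integral_le)
    also have "\<dots> = c"
      using D' by (rule integral_unique)
    finally show ?thesis .
  next
    case False
    then have "(LINT t:{0..T}|lborel. \<integral>z. g (t, z) \<partial>(\<nu> t \<Otimes>\<^sub>M \<nu> t)) = 0"
      unfolding set_lebesgue_integral_def set_integrable_def by (rule not_integrable_integral_eq)
    moreover have "0 \<le> c"
      using D by (rule has_integral_nonneg) simp
    ultimately show ?thesis by simp
  qed
qed

lemma tendsto_nn_integral_cutoff_density_approx: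
  fixes M :: "('a::{real_normed_vector, second_countable_topology} \<times> 'a) measure"
  assumes "0 \<le> \<alpha>" "sets M = sets borel"
  shows "(\<lambda>n. \<integral>\<^sup>+ z. ennreal (cutoff_density_approx \<alpha> a b n (t, z)) \<partial>(M \<Otimes>\<^sub>M M))
    \<longlonglongrightarrow> indicator {a<..<b} t * dissipation \<alpha> M"
proof -
  have "(\<lambda>n. \<integral>\<^sup>+ z. ennreal (cutoff_density_approx \<alpha> a b n (t, z)) \<partial>(M \<Otimes>\<^sub>M M))
      \<longlonglongrightarrow> (\<integral>\<^sup>+ z. ennreal (indicator {a<..<b} t * dissipation_density \<alpha> z) \<partial>(M \<Otimes>\<^sub>M M))"
  proof (rule nn_integral_LIMSEQ)
    show "incseq (\<lambda>n z. ennreal (cutoff_density_approx \<alpha> a b n (t, z)))"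
      using assms(1) by (auto simp: incseq_def le_fun_def intro: ennreal_leI cutoff_density_approx_mono)
    show "(\<lambda>z. ennreal (cutoff_density_approx \<alpha> a b n (t, z))) \<in> borel_measurable (M \<Otimes>\<^sub>M M)" for n
      using borel_measurable_pair_slice[OF borel_measurable_continuous_onI[OF continuous_cutoff_density_approx]
          assms(2)]
      by measurable
    show "(\<lambda>n. ennreal (cutoff_density_approx \<alpha> a b n (t, z)))
        \<longlonglongrightarrow> ennreal (indicator {a<..<b} t * dissipation_density \<alpha> z)" for z
      by (intro tendsto_ennrealI cutoff_density_approx_tendsto)
  qed
  then show ?thesis
    by (cases "t \<in> {a<..<b}") (simp_all add: dissipation_eq_nn_integral_density)
qed

lemma tendsto_time_integral_cutoff_density_approx:
  fixes \<mu> :: "real \<Rightarrow> ('a::{real_normed_vector, second_countable_topology} \<times> 'a) measure"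
  assumes \<alpha>: "0 \<le> \<alpha>" and sub: "{t1..t2} \<subseteq> {0..T}"
    and \<mu>_fin: "\<And>t. t \<in> {0..T} \<Longrightarrow> finite_measure (\<mu> t)"
    and \<mu>_sets: "\<And>t. t \<in> {0..T} \<Longrightarrow> sets (\<mu> t) = sets borel"
    and \<mu>_kernel: "\<And>B. B \<in> sets borel \<Longrightarrow>
        (\<lambda>t. emeasure (\<mu> t) B) \<in> borel_measurable (restrict_space lborel {0..T})"
  shows "(\<lambda>n. \<integral>\<^sup>+ t\<in>{0..T}. (\<integral>\<^sup>+ z. ennreal (cutoff_density_approx \<alpha> t1 t2 n (t, z))
      \<partial>(\<mu> t \<Otimes>\<^sub>M \<mu> t)) \<partial>lborel) \<longlonglongrightarrow> (\<integral>\<^sup>+ t\<in>{t1..t2}. dissipation \<alpha> (\<mu> t) \<partial>lborel)"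
proof -
  define F where "F n t = (\<integral>\<^sup>+ z. ennreal (cutoff_density_approx \<alpha> t1 t2 n (t, z)) \<partial>(\<mu> t \<Otimes>\<^sub>M \<mu> t))" for n t
  have F_meas: "F n \<in> borel_measurable (restrict_space lborel {0..T})" for n
    using borel_measurable_nn_integral_pair_kernel[where h="\<lambda>p. ennreal (cutoff_density_approx \<alpha> t1 t2 n p)",
        OF \<mu>_fin \<mu>_sets \<mu>_kernel]
    unfolding F_def
    by (simp add: measurable_compose[OF borel_measurable_continuous_onI[OF continuous_cutoff_density_approx]
          measurable_ennreal])
  have "(\<lambda>n. \<integral>\<^sup>+ t. F n t * indicator {0..T} t \<partial>lborel)
      \<longlonglongrightarrow> (\<integral>\<^sup>+ t. indicator {t1<..<t2} t * dissipation \<alpha> (\<mu> t) * indicator {0..T} t \<partial>lborel)"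
  proof (rule nn_integral_LIMSEQ)
    show "incseq (\<lambda>n t. F n t * indicator {0..T} t)"
      unfolding F_def using \<alpha>
      by (auto simp: incseq_def le_fun_def
          intro!: mult_right_mono nn_integral_mono ennreal_leI cutoff_density_approx_mono)
    show "(\<lambda>t. F n t * indicator {0..T} t) \<in> borel_measurable lborel" for n
      using F_meas[of n] by (subst (asm) borel_measurable_restrict_space_iff_ennreal) auto
    show "(\<lambda>n. F n t * indicator {0..T} t) \<longlonglongrightarrow> indicator {t1<..<t2} t * dissipation \<alpha> (\<mu> t) * indicator {0..T} t"
      for t
      using tendsto_nn_integral_cutoff_density_approx[OF \<alpha> \<mu>_sets]
      by (cases "t \<in> {0..T}") (auto simp: F_def)
  qed
  also have "(\<integral>\<^sup>+ t. indicator {t1<..<t2} t * dissipation \<alpha> (\<mu> t) * indicator {0..T} t \<partial>lborel)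
      = (\<integral>\<^sup>+ t\<in>{t1..t2}. dissipation \<alpha> (\<mu> t) \<partial>lborel)"
  proof (rule nn_integral_cong_AE)
    have "AE t in lborel. t \<noteq> t1" "AE t in lborel. t \<noteq> t2"
      by (rule AE_lborel_singleton)+
    then show "AE t in lborel. indicator {t1<..<t2} t * dissipation \<alpha> (\<mu> t) * indicator {0..T} t
        = dissipation \<alpha> (\<mu> t) * indicator {t1..t2} t"
      by eventually_elim (use sub in \<open>auto simp: indicator_def\<close>)
  qed
  finally show ?thesis
    unfolding F_def .
qed

lemma time_integral_dissipation_le_of_narrow_conv_time:
  fixes \<mu> :: "real \<Rightarrow> ('a::{real_normed_vector, second_countable_topology} \<times> 'a) measure"
    and \<nu> :: "nat \<Rightarrow> real \<Rightarrow> ('a \<times> 'a) measure"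
  assumes T: "T > 0" and \<alpha>: "0 \<le> \<alpha>" and sub: "{t1..t2} \<subseteq> {0..T}"
    and \<mu>_fin: "\<And>t. t \<in> {0..T} \<Longrightarrow> finite_measure (\<mu> t)"
    and \<mu>_sets: "\<And>t. t \<in> {0..T} \<Longrightarrow> sets (\<mu> t) = sets borel"
    and \<mu>_kernel: "\<And>B. B \<in> sets borel \<Longrightarrow>
        (\<lambda>t. emeasure (\<mu> t) B) \<in> borel_measurable (restrict_space lborel {0..T})"
    and \<nu>: "eventually (\<lambda>k. \<forall>t. prob_space (\<nu> k t) \<and> sets (\<nu> k t) = sets borel) sequentially"
    and conv: "narrow_conv_time T (\<lambda>k t. \<nu> k t \<Otimes>\<^sub>M \<nu> k t) (\<lambda>t. \<mu> t \<Otimes>\<^sub>M \<mu> t)"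
    and \<nu>_diss: "eventually (\<lambda>k. (\<forall>t\<in>{t1..t2}. dissipation \<alpha> (\<nu> k t) < \<infinity>)
        \<and> ((\<lambda>t. enn2real (dissipation \<alpha> (\<nu> k t))) has_integral c k) {t1..t2}) sequentially"
    and c: "c \<longlonglongrightarrow> L"
  shows "(\<integral>\<^sup>+ t\<in>{t1..t2}. dissipation \<alpha> (\<mu> t) \<partial>lborel) \<le> ennreal L"
proof -
  have \<nu>_prob: "eventually (\<lambda>k. \<forall>t. prob_space (\<nu> k t)) sequentially"
    using \<nu> by (rule eventually_mono) simp
  have "(\<integral>\<^sup>+ t\<in>{0..T}. (\<integral>\<^sup>+ z. ennreal (cutoff_density_approx \<alpha> t1 t2 n (t, z))
      \<partial>(\<mu> t \<Otimes>\<^sub>M \<mu> t)) \<partial>lborel) \<le> ennreal L" for n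
  proof (rule nn_integral_test_le_of_narrow_conv_time[OF T \<mu>_fin \<mu>_sets \<mu>_kernel \<nu>_prob conv
        continuous_cutoff_density_approx cutoff_density_approx_nonneg cutoff_density_approx_le _ c])
    show "eventually (\<lambda>k. (LINT t:{0..T}|lborel.
        \<integral>z. cutoff_density_approx \<alpha> t1 t2 n (t, z) \<partial>(\<nu> k t \<Otimes>\<^sub>M \<nu> k t)) \<le> c k) sequentially"
      using \<nu> \<nu>_diss
    proof eventually_elim
      case (elim k)
      then show ?case
        using borel_measurable_continuous_onI[OF continuous_cutoff_density_approx]
          cutoff_density_approx_nonneg cutoff_density_approx_le_dissipation_density[OF \<alpha>]
        by (intro set_integral_test_le_of_dissipation_integral[OF sub]) auto
    qed
  qed
  then show ?thesis
    by (intro LIMSEQ_le_const2[OF tendsto_time_integral_cutoff_density_approx[OF \<alpha> sub \<mu>_fin \<mu>_sets \<mu>_kernel]])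
      auto
qed

theorem mainTheorem9:
  fixes T \<alpha> M :: real
    and x v :: "nat \<Rightarrow> nat \<Rightarrow> real \<Rightarrow> 'a::euclidean_space"
    and \<rho>0 :: "'a measure" and u0 :: "'a \<Rightarrow> 'a"
    and \<sigma> :: "nat \<Rightarrow> nat"
    and \<mu> :: "real \<Rightarrow> ('a \<times> 'a) measure"
    and AE_set :: "real set"
    and t1 t2 :: real
  assumes T_pos: "T > 0"
    and alpha: "1 \<le> \<alpha>" "\<alpha> \<le> 2"
    and rho0_prob: "prob_space \<rho>0" and rho0_sets: "sets \<rho>0 = sets borel"
    and rho0_cpt: "\<exists>K. compact K \<and> emeasure \<rho>0 (UNIV - K) = 0"
    and u0_meas: "u0 \<in> borel_measurable \<rho>0"
    and u0_bdd: "\<exists>C. AE y in \<rho>0. norm (u0 y) \<le> C"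
    and distinct_init: "\<And>N i j. i < N \<Longrightarrow> j < N \<Longrightarrow> i \<noteq> j \<Longrightarrow> x N i 0 \<noteq> x N j 0"
    and no_coll: "\<And>N i j t. i < N \<Longrightarrow> j < N \<Longrightarrow> i \<noteq> j \<Longrightarrow> t \<in> {0..T} \<Longrightarrow> x N i t \<noteq> x N j t"
    and ode_x: "\<And>N i t. i < N \<Longrightarrow> t \<in> {0..T} \<Longrightarrow>
        (x N i has_vector_derivative v N i t) (at t within {0..T})"
    and ode_v: "\<And>N i t. i < N \<Longrightarrow> t \<in> {0..T} \<Longrightarrow>
        (v N i has_vector_derivative
           (1 / real N) *\<^sub>R (\<Sum>j\<in>{..<N} - {i}. psi \<alpha> (norm (x N i t - x N j t)) *\<^sub>R (v N j t - v N i t)))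
        (at t within {0..T})"
    and init_rho: "narrow_conv (\<lambda>N. empirical N (\<lambda>i. x N i 0)) \<rho>0"
    and init_mom: "\<And>f::'a \<Rightarrow> real. continuous_on UNIV f \<Longrightarrow> bounded (range f) \<Longrightarrow>
        (\<lambda>N. (1 / real N) *\<^sub>R (\<Sum>i<N. f (x N i 0) *\<^sub>R v N i 0)) \<longlonglongrightarrow> (\<integral>y. f y *\<^sub>R u0 y \<partial>\<rho>0)"
    and supp_N: "\<And>N i t. i < N \<Longrightarrow> t \<in> {0..T} \<Longrightarrow>
        norm (x N i t) < (T + 1) * M \<and> norm (v N i t) < M"
    and mu_fin: "\<And>t. t \<in> {0..T} \<Longrightarrow> finite_measure (\<mu> t)"
    and mu_sets: "\<And>t. t \<in> {0..T} \<Longrightarrow> sets (\<mu> t) = sets borel"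
    and mu_kernel: "\<And>B. B \<in> sets borel \<Longrightarrow>
        (\<lambda>t. emeasure (\<mu> t) B) \<in> borel_measurable (restrict_space lborel {0..T})"
    and mu_supp: "\<And>t. t \<in> {0..T} \<Longrightarrow>
        emeasure (\<mu> t) (UNIV - closure (ball 0 ((T + 1) * M) \<times> ball 0 M)) = 0"
    and sub: "strict_mono \<sigma>"
    and conv_mu: "narrow_conv_time T
        (\<lambda>k t. empirical (\<sigma> k) (\<lambda>i. (x (\<sigma> k) i t, v (\<sigma> k) i t))) \<mu>"
    and conv_mu2: "narrow_conv_time T
        (\<lambda>k t. empirical (\<sigma> k) (\<lambda>i. (x (\<sigma> k) i t, v (\<sigma> k) i t))
               \<Otimes>\<^sub>M empirical (\<sigma> k) (\<lambda>i. (x (\<sigma> k) i t, v (\<sigma> k) i t)))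
        (\<lambda>t. \<mu> t \<Otimes>\<^sub>M \<mu> t)"
    and conv_rho: "\<And>\<epsilon>. \<epsilon> > 0 \<Longrightarrow> eventually (\<lambda>k. \<forall>t\<in>{0..T}.
        dBL (empirical (\<sigma> k) (\<lambda>i. x (\<sigma> k) i t)) (distr (\<mu> t) borel fst) < \<epsilon>) sequentially"
    and AE_sub: "AE_set \<subseteq> {0..T}"
    and AE_full: "{0..T} - AE_set \<in> null_sets lborel"
    and conv_E: "\<And>t. t \<in> AE_set \<Longrightarrow>
        (\<lambda>k. energy (empirical (\<sigma> k) (\<lambda>i. (x (\<sigma> k) i t, v (\<sigma> k) i t)))) \<longlonglongrightarrow> energy (\<mu> t)"
    and t1: "t1 \<in> AE_set" and t2: "t2 \<in> AE_set" and t12: "t1 \<le> t2"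
  shows "energy (\<mu> t2) \<le> energy (\<mu> t1)
    \<and> (\<integral>\<^sup>+ t\<in>{t1..t2}. dissipation \<alpha> (\<mu> t) \<partial>lborel) \<le> ennreal (energy (\<mu> t1) - energy (\<mu> t2))"
proof -
  define \<nu> where "\<nu> k t = empirical (\<sigma> k) (\<lambda>i. (x (\<sigma> k) i t, v (\<sigma> k) i t))" for k t
  have t12T: "{t1..t2} \<subseteq> {0..T}"
    using t1 t2 AE_sub by auto
  have "eventually (\<lambda>k. 0 < \<sigma> k) sequentially"
    using seq_suble[OF sub] by (intro eventually_sequentiallyI[of 1]) (metis less_le_trans zero_less_one)
  then have \<nu>: "eventually (\<lambda>k. (\<forall>t. prob_space (\<nu> k t) \<and> sets (\<nu> k t) = sets borel)
      \<and> (\<forall>t. dissipation \<alpha> (\<nu> k t) < \<infinity>)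
      \<and> ((\<lambda>t. enn2real (dissipation \<alpha> (\<nu> k t))) has_integral energy (\<nu> k t1) - energy (\<nu> k t2)) {t1..t2})
      sequentially"
  proof eventually_elim
    case (elim k)
    have "((\<lambda>t. enn2real (dissipation \<alpha> (\<nu> k t))) has_integral energy (\<nu> k t1) - energy (\<nu> k t2)) {t1..t2}"
      unfolding \<nu>_def using elim t12 t12T
      by (intro particle_energy_identity has_vector_derivative_within_subset[OF ode_v]) auto
    then show ?case
      using elim by (simp add: \<nu>_def prob_space_empirical sets_empirical dissipation_empirical)
  qed
  have E_lim: "(\<lambda>k. energy (\<nu> k t)) \<longlonglongrightarrow> energy (\<mu> t)" if "t \<in> AE_set" for t
    using conv_E[OF that] by (simp add: \<nu>_def)
  have "(\<integral>\<^sup>+ t\<in>{t1..t2}. dissipation \<alpha> (\<mu> t) \<partial>lborel) \<le> ennreal (energy (\<mu> t1) - energy (\<mu> t2))"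
    using T_pos alpha t12T mu_fin mu_sets mu_kernel \<nu> conv_mu2 tendsto_diff[OF E_lim[OF t1] E_lim[OF t2]]
    by (intro time_integral_dissipation_le_of_narrow_conv_time[where \<nu>=\<nu>])
      (auto simp: \<nu>_def elim: eventually_mono)
  moreover have "energy (\<mu> t2) \<le> energy (\<mu> t1)"
    using \<nu> by (intro tendsto_le[OF trivial_limit_sequentially E_lim[OF t1] E_lim[OF t2]])
      (auto elim!: eventually_mono dest: has_integral_nonneg)
  ultimately show ?thesis by simp
qed

end
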